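(* Consider the TVFJ dynamics described in the context. For every $t\in\mathbb N$, $t\ge1$, the matrix \[ \Sigma[t]:=\sum_{\tau=0}^{t-1}\Phi(t,\tau+1)\,(I-\Lambda[\tau]) \] is row-substochastic, i.e., it has entries in $[0,1]$ and each of its row sums is at most $1$.
   Context: There are $n$ agents with opinions $\mathbf x[t]\in\mathbb R^n$ and innate opinions $\mathbf s\in[0,1]^n$, evolving by $\mathbf x[t+1]=\Lambda[t]W[t]\mathbf x[t]+(I-\Lambda[t])\mathbf s$, where $W[t]\in\mathbb R^{n\times n}$ is row-stochastic (nonnegative entries, rows summing to 1) and $\Lambda[t]=\mathrm{diag}(\lambda_1[t],\dots,\lambda_n[t])$ with $\lambda_i[t]\in[0,1]$. The state transition matrix is $\Phi(t,\tau)=\Lambda[t-1]W[t-1]\cdots\Lambda[\tau]W[\tau]$ for $t>\tau$ and $\Phi(\tau,\tau)=I$. *)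

theory Defs
  imports "HOL-Analysis.Analysis"
begin

text \<open>Lambda[t] = diag(lambda_1[t],...,lambda_n[t]) given by the vector lam t.\<close>
definition diagm :: "real^'n \<Rightarrow> real^'n^'n" where
  "diagm v = (\<chi> i j. if i = j then v $ i else 0)"

definition row_stochastic :: "real^'n^'n \<Rightarrow> bool" where
  "row_stochastic A \<longleftrightarrow> (\<forall>i j. A $ i $ j \<ge> 0) \<and> (\<forall>i. (\<Sum>j\<in>UNIV. A $ i $ j) = 1)"

definition row_substochastic :: "real^'n^'n \<Rightarrow> bool" where
  "row_substochastic A \<longleftrightarrow> (\<forall>i j. 0 \<le> A $ i $ j \<and> A $ i $ j \<le> 1) \<and> (\<forall>i. (\<Sum>j\<in>UNIV. A $ i $ j) \<le> 1)"

text \<open>State transition matrix Phi(t,tau) = Lambda[t-1]W[t-1]...Lambda[tau]W[tau] for t > tau,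
  and the identity for t = tau (also returned for t < tau, where it is not used).\<close>
fun Phi :: "(nat \<Rightarrow> real^'n) \<Rightarrow> (nat \<Rightarrow> real^'n^'n) \<Rightarrow> nat \<Rightarrow> nat \<Rightarrow> real^'n^'n" where
  "Phi lam W 0 tau = mat 1"
| "Phi lam W (Suc t) tau =
     (if Suc t \<le> tau then mat 1 else (diagm (lam t) ** W t) ** Phi lam W t tau)"

definition Sigma :: "(nat \<Rightarrow> real^'n) \<Rightarrow> (nat \<Rightarrow> real^'n^'n) \<Rightarrow> nat \<Rightarrow> real^'n^'n" where
  "Sigma lam W t = (\<Sum>tau<t. Phi lam W t (tau + 1) ** (mat 1 - diagm (lam tau)))"

end

theory Submission
  imports Defs
begin

text \<open>Splitting off the last summand shows that \<open>\<Sigma>\<close> obeys the affine recursion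
  \<open>\<Sigma>[t+1] = \<Lambda>[t] W[t] \<Sigma>[t] + (I - \<Lambda>[t])\<close> with \<open>\<Sigma>[0] = 0\<close>.
  Row-substochastic matrices are closed under products, and row \<open>i\<close> of the right-hand side
  is \<open>\<lambda>\<^sub>i\<close> times a substochastic row plus \<open>1 - \<lambda>\<^sub>i\<close> times the unit row \<open>e\<^sub>i\<close>, so
  induction on \<open>t\<close> gives the claim.\<close>

lemma row_substochastic_iff:
  "row_substochastic A \<longleftrightarrow> (\<forall>i j. 0 \<le> A $ i $ j) \<and> (\<forall>i. (\<Sum>j\<in>UNIV. A $ i $ j) \<le> 1)"
proof -
  have "A $ i $ j \<le> 1"
    if "\<forall>i j. 0 \<le> A $ i $ j" and "\<forall>i. (\<Sum>j\<in>UNIV. A $ i $ j) \<le> 1" for i j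
  proof -
    have "A $ i $ j \<le> (\<Sum>j\<in>UNIV. A $ i $ j)"
      using that(1) by (intro member_le_sum) auto
    then show ?thesis using that(2) by (meson order_trans)
  qed
  then show ?thesis unfolding row_substochastic_def by blast
qed

lemma row_stochastic_imp_substochastic: "row_stochastic A \<Longrightarrow> row_substochastic A"
  by (simp add: row_stochastic_def row_substochastic_iff)

lemma row_substochastic_mult:
  assumes A: "row_substochastic A" and B: "row_substochastic B"
  shows "row_substochastic (A ** B)"
  unfolding row_substochastic_iff
proof (intro conjI allI)
  fix i j
  show "0 \<le> (A ** B) $ i $ j"
    using A B by (auto simp: matrix_matrix_mult_def row_substochastic_iff intro!: sum_nonneg)
next
  fix i
  have "(\<Sum>j\<in>UNIV. (A ** B) $ i $ j) = (\<Sum>j\<in>UNIV. \<Sum>k\<in>UNIV. A $ i $ k * B $ k $ j)"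
    by (simp add: matrix_matrix_mult_def)
  also have "\<dots> = (\<Sum>k\<in>UNIV. A $ i $ k * (\<Sum>j\<in>UNIV. B $ k $ j))"
    by (subst sum.swap) (simp add: sum_distrib_left)
  also have "\<dots> \<le> (\<Sum>k\<in>UNIV. A $ i $ k)"
    using A B by (intro sum_mono mult_right_le_one_le) (auto simp: row_substochastic_iff intro: sum_nonneg)
  also have "\<dots> \<le> 1"
    using A by (simp add: row_substochastic_iff)
  finally show "(\<Sum>j\<in>UNIV. (A ** B) $ i $ j) \<le> 1" .
qed

lemma diagm_mult_nth: "(diagm l ** M) $ i $ j = l $ i * M $ i $ j"
proof -
  have "(diagm l ** M) $ i $ j = (\<Sum>k\<in>UNIV. (if i = k then l $ i else 0) * M $ k $ j)"
    by (simp add: matrix_matrix_mult_def diagm_def)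
  also have "\<dots> = (\<Sum>k\<in>UNIV. if k = i then l $ i * M $ i $ j else 0)"
    by (rule sum.cong) auto
  finally show ?thesis by simp
qed

lemma row_substochastic_diagm_convex:
  assumes B: "row_substochastic B" and l: "\<And>i. 0 \<le> l $ i \<and> l $ i \<le> 1"
  shows "row_substochastic (diagm l ** B + (mat 1 - diagm l))"
  unfolding row_substochastic_iff
proof (intro conjI allI)
  have entry: "(diagm l ** B + (mat 1 - diagm l)) $ i $ j
      = l $ i * B $ i $ j + (if i = j then 1 - l $ i else 0)" for i j
    by (simp add: diagm_mult_nth) (simp add: mat_def diagm_def)
  fix i
  show "0 \<le> (diagm l ** B + (mat 1 - diagm l)) $ i $ j" for j
    using B l[of i] unfolding entry row_substochastic_iff by auto
  have "(\<Sum>j\<in>UNIV. (diagm l ** B + (mat 1 - diagm l)) $ i $ j)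
      = l $ i * (\<Sum>j\<in>UNIV. B $ i $ j) + (1 - l $ i)"
    unfolding entry by (simp add: sum.distrib sum_distrib_left)
  also have "\<dots> \<le> l $ i * 1 + (1 - l $ i)"
    using B l[of i] by (intro add_right_mono mult_left_mono) (auto simp: row_substochastic_iff)
  finally show "(\<Sum>j\<in>UNIV. (diagm l ** B + (mat 1 - diagm l)) $ i $ j) \<le> 1"
    by simp
qed

lemma matrix_mul_sum_right: "(M :: 'a::semiring_1^'n^'m) ** sum f S = (\<Sum>x\<in>S. M ** f x)"
  by (induction S rule: infinite_finite_induct) (auto simp: matrix_add_ldistrib)

lemma Sigma_0: "Sigma lam W 0 = 0"
  by (simp add: Sigma_def)

lemma Sigma_Suc:
  "Sigma lam W (Suc t) = (diagm (lam t) ** W t) ** Sigma lam W t + (mat 1 - diagm (lam t))"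
proof -
  have "Phi lam W (Suc t) (tau + 1) = (diagm (lam t) ** W t) ** Phi lam W t (tau + 1)"
    if "tau < t" for tau
    using that by simp
  then have "(\<Sum>tau<t. Phi lam W (Suc t) (tau + 1) ** (mat 1 - diagm (lam tau)))
      = (diagm (lam t) ** W t) ** Sigma lam W t"
    by (simp add: Sigma_def matrix_mul_sum_right matrix_mul_assoc)
  then show ?thesis
    by (simp add: Sigma_def)
qed

lemma row_substochastic_Sigma:
  assumes "\<And>k. row_stochastic (W k)" and "\<And>k i. 0 \<le> lam k $ i \<and> lam k $ i \<le> 1"
  shows "row_substochastic (Sigma lam W t)"
proof (induction t)
  case 0
  then show ?case by (simp add: Sigma_0 row_substochastic_iff)
next
  case (Suc t)
  have "row_substochastic (W t ** Sigma lam W t)"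
    using row_stochastic_imp_substochastic[OF assms(1)] Suc.IH by (rule row_substochastic_mult)
  then show ?case
    unfolding Sigma_Suc matrix_mul_assoc[symmetric] by (intro row_substochastic_diagm_convex assms(2))
qed

theorem lemma4:
  fixes lam :: "nat \<Rightarrow> real^'n" and W :: "nat \<Rightarrow> real^'n^'n" and t :: nat
  assumes W_rs: "\<And>k. row_stochastic (W k)"
    and lam_range: "\<And>k i. 0 \<le> lam k $ i \<and> lam k $ i \<le> 1"
    and t_pos: "t \<ge> 1"
  shows "row_substochastic (Sigma lam W t)"
  using W_rs lam_range by (rule row_substochastic_Sigma)

end
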